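(* The set $\{\phi_{j_1,j_2,j_3}\;:\;(j_1,j_2,j_3)\in\mathbf J\}$ of genus two Schur polynomials is a $\mathbb C$-basis of $\mathcal H$.
   Context: A triple $(j_1,j_2,j_3)$ of nonnegative integers is admissible if $|j_1-j_2|\le j_3\le j_1+j_2$ and $j_1+j_2+j_3$ is even; $\mathbf J$ denotes the set of admissible triples. Let $\mathcal H=\mathbb C[x_{12}^{\pm1},x_{13}^{\pm1},x_{23}^{\pm1}]^{\mathbb Z_2\times\mathbb Z_2\times\mathbb Z_2}=\mathbb C[x_{12}+x_{12}^{-1},x_{13}+x_{13}^{-1},x_{23}+x_{23}^{-1}]$. For $a,b\in\{\pm1\}$ set $K_{a,b}(j_1,j_2,j_3)=ab\,\frac{(aj_1+bj_2+j_3+a+b+2)(aj_1+bj_2-j_3+a+b)}{4(j_1+1)(j_2+1)}$. The genus two Schur polynomials $(\phi_{j_1,j_2,j_3})_{(j_1,j_2,j_3)\in\mathbf J}$ are the unique family in $\mathcal H$ with $\phi_{0,0,0}=1$ such that for all admissible $(j_1,j_2,j_3)$: $(x_{12}+x_{12}^{-1})\phi_{j_1,j_2,j_3}=\sum_{a,b\in\{\pm1\}}K_{a,b}(j_1,j_2,j_3)\phi_{j_1+a,j_2+b,j_3}$, $(x_{13}+x_{13}^{-1})\phi_{j_1,j_2,j_3}=\sum_{a,b\in\{\pm1\}}K_{a,b}(j_1,j_3,j_2)\phi_{j_1+a,j_2,j_3+b}$, $(x_{23}+x_{23}^{-1})\phi_{j_1,j_2,j_3}=\sum_{a,b\in\{\pm1\}}K_{a,b}(j_2,j_3,j_1)\phi_{j_1,j_2+a,j_3+b}$,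 where $\phi$ of a non-admissible triple is interpreted as $0$. *)

theory Defs
  imports "HOL-Computational_Algebra.Polynomial"
begin

text \<open>The algebra H = C[X12, X13, X23] with X_ij = x_ij + x_ij^(-1),
  realised as polynomials in three variables (nested univariate polynomials).\<close>

type_synonym H = "complex poly poly poly"

definition X12 :: H where "X12 = [:[:[:0, 1:]:]:]"
definition X13 :: H where "X13 = [:[:0, 1:]:]"
definition X23 :: H where "X23 = [:0, 1:]"

definition sc :: "complex \<Rightarrow> H" where "sc c = [:[:[:c:]:]:]"

definition admissible :: "int \<times> int \<times> int \<Rightarrow> bool" where
  "admissible t = (case t of (j1, j2, j3) \<Rightarrow>
     0 \<le> j1 \<and> 0 \<le> j2 \<and> 0 \<le> j3 \<and> \<bar>j1 - j2\<bar> \<le> j3 \<and> j3 \<le> j1 + j2 \<and> even (j1 + j2 + j3))"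

definition JJ :: "(int \<times> int \<times> int) set" where
  "JJ = {t. admissible t}"

definition K :: "int \<Rightarrow> int \<Rightarrow> int \<Rightarrow> int \<Rightarrow> int \<Rightarrow> complex" where
  "K a b j1 j2 j3 = of_int (a * b) *
     (of_int ((a*j1 + b*j2 + j3 + a + b + 2) * (a*j1 + b*j2 - j3 + a + b))
      / (4 * of_int ((j1 + 1) * (j2 + 1))))"

definition ext0 :: "(int \<times> int \<times> int \<Rightarrow> H) \<Rightarrow> int \<times> int \<times> int \<Rightarrow> H" where
  "ext0 phi t = (if admissible t then phi t else 0)"

definition schur_family :: "(int \<times> int \<times> int \<Rightarrow> H) \<Rightarrow> bool" where
  "schur_family phi \<longleftrightarrow>
     phi (0, 0, 0) = 1 \<and>
     (\<forall>j1 j2 j3. admissible (j1, j2, j3) \<longrightarrow>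
        X12 * phi (j1, j2, j3) =
          (\<Sum>a\<in>{-1, 1}. \<Sum>b\<in>{-1, 1}. sc (K a b j1 j2 j3) * ext0 phi (j1 + a, j2 + b, j3)) \<and>
        X13 * phi (j1, j2, j3) =
          (\<Sum>a\<in>{-1, 1}. \<Sum>b\<in>{-1, 1}. sc (K a b j1 j3 j2) * ext0 phi (j1 + a, j2, j3 + b)) \<and>
        X23 * phi (j1, j2, j3) =
          (\<Sum>a\<in>{-1, 1}. \<Sum>b\<in>{-1, 1}. sc (K a b j2 j3 j1) * ext0 phi (j1, j2 + a, j3 + b)))"

end

theory Submission
  imports Defs
begin

(* Grade the monomials X12^a X13^b X23^c of H by total degree a + b + c. By induction on
   a + b + c, the Schur polynomial with index (a + b, a + c, b + c) has X12^a X13^b X23^c as its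
   unique monomial of maximal degree: multiplying the Schur polynomial one step lower by X12, X13
   or X23, the recurrence produces it as the (1,1)-term, whose coefficient K_{1,1} is nonzero,
   while the other three terms have smaller index sum and so, by induction, smaller degree.
   As (a, b, c) \<mapsto> (a + b, a + c, b + c) is a bijection from triples of naturals onto J, the
   family is triangular with nonzero diagonal with respect to the monomial basis. *)

section \<open>Monomial coefficients and total degree\<close>

(* (a, b, c) stands for X12^a X13^b X23^c; X23 is the outermost variable of H, X12 the innermost. *)
type_synonym monomial = "nat \<times> nat \<times> nat"

definition monom_coeff :: "H \<Rightarrow> monomial \<Rightarrow> complex" where
  "monom_coeff p m = (case m of (a, b, c) \<Rightarrow> coeff (coeff (coeff p c) b) a)"

definition monom_deg :: "monomial \<Rightarrow> nat" where
  "monom_deg m = (case m of (a, b, c) \<Rightarrow> a + b + c)"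

definition tdeg_le :: "nat \<Rightarrow> H set" where
  "tdeg_le n = {p. \<forall>m. n < monom_deg m \<longrightarrow> monom_coeff p m = 0}"

lemma monom_coeff_0 [simp]: "monom_coeff 0 m = 0"
  by (simp add: monom_coeff_def split: prod.split)

lemma monom_coeff_1: "monom_coeff 1 m = (if m = (0, 0, 0) then 1 else 0)"
  by (auto simp: monom_coeff_def split: prod.split)

lemma monom_coeff_add [simp]: "monom_coeff (p + q) m = monom_coeff p m + monom_coeff q m"
  by (simp add: monom_coeff_def split: prod.split)

lemma monom_coeff_uminus [simp]: "monom_coeff (- p) m = - monom_coeff p m"
  by (simp add: monom_coeff_def split: prod.split)

lemma monom_coeff_diff [simp]: "monom_coeff (p - q) m = monom_coeff p m - monom_coeff q m"
  by (simp add: monom_coeff_def split: prod.split)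

lemma monom_coeff_sc_mult [simp]: "monom_coeff (sc k * p) m = k * monom_coeff p m"
  by (simp add: monom_coeff_def sc_def split: prod.split)

lemma monom_coeff_sum [simp]: "monom_coeff (sum f S) m = (\<Sum>x\<in>S. monom_coeff (f x) m)"
  by (simp add: monom_coeff_def coeff_sum split: prod.split)

lemma H_eq_0I:
  assumes "\<And>m. monom_coeff p m = 0"
  shows "p = 0"
proof -
  have "coeff (coeff (coeff p c) b) a = 0" for a b c
    using assms[of "(a, b, c)"] by (simp add: monom_coeff_def)
  then show ?thesis
    by (simp add: poly_eq_iff)
qed

lemma finite_monom_support: "finite {m. monom_coeff p m \<noteq> 0}"
proof (rule finite_subset)
  show "{m. monom_coeff p m \<noteq> 0} \<subseteq>
      (\<Union>c\<le>degree p. \<Union>b\<le>degree (coeff p c). (\<lambda>a. (a, b, c)) ` {..degree (coeff (coeff p c) b)})"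
    by (force simp: monom_coeff_def intro: le_degree)
qed auto

lemma finite_monom_deg_less: "finite {m. monom_deg m < n}"
  by (rule finite_subset[of _ "{..<n} \<times> {..<n} \<times> {..<n}"]) (auto simp: monom_deg_def)

lemma finite_monom_deg_eq: "finite {m. monom_deg m = n}"
  by (rule finite_subset[OF _ finite_monom_deg_less[of "Suc n"]]) auto

lemma tdeg_leD: "p \<in> tdeg_le n \<Longrightarrow> n < monom_deg m \<Longrightarrow> monom_coeff p m = 0"
  unfolding tdeg_le_def by blast

lemma tdeg_le_mono: "p \<in> tdeg_le n \<Longrightarrow> n \<le> k \<Longrightarrow> p \<in> tdeg_le k"
  by (simp add: tdeg_le_def)

lemma zero_in_tdeg_le [simp]: "0 \<in> tdeg_le n"
  by (simp add: tdeg_le_def)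

lemma tdeg_le_add: "p \<in> tdeg_le n \<Longrightarrow> q \<in> tdeg_le n \<Longrightarrow> p + q \<in> tdeg_le n"
  by (simp add: tdeg_le_def)

lemma tdeg_le_uminus: "p \<in> tdeg_le n \<Longrightarrow> - p \<in> tdeg_le n"
  by (simp add: tdeg_le_def)

lemma tdeg_le_sc_mult: "p \<in> tdeg_le n \<Longrightarrow> sc k * p \<in> tdeg_le n"
  by (simp add: tdeg_le_def)

section \<open>Top monomials\<close>

definition top_monomial :: "H \<Rightarrow> monomial \<Rightarrow> bool" where
  "top_monomial p m \<longleftrightarrow> monom_coeff p m \<noteq> 0 \<and>
     (\<forall>m'. m' \<noteq> m \<longrightarrow> monom_deg m \<le> monom_deg m' \<longrightarrow> monom_coeff p m' = 0)"

lemma top_monomialI: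
  "monom_coeff p m \<noteq> 0 \<Longrightarrow>
    (\<And>m'. m' \<noteq> m \<Longrightarrow> monom_deg m \<le> monom_deg m' \<Longrightarrow> monom_coeff p m' = 0) \<Longrightarrow>
    top_monomial p m"
  unfolding top_monomial_def by blast

lemma top_monomial_coeff_nonzero: "top_monomial p m \<Longrightarrow> monom_coeff p m \<noteq> 0"
  unfolding top_monomial_def by blast

lemma top_monomial_coeff_eq_0:
  "top_monomial p m \<Longrightarrow> m' \<noteq> m \<Longrightarrow> monom_deg m \<le> monom_deg m' \<Longrightarrow> monom_coeff p m' = 0"
  unfolding top_monomial_def by blast

lemma top_monomial_one: "top_monomial 1 (0, 0, 0)"
  by (rule top_monomialI) (simp_all add: monom_coeff_1)

lemma top_monomial_imp_tdeg_le: "top_monomial p m \<Longrightarrow> p \<in> tdeg_le (monom_deg m)"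
  unfolding tdeg_le_def using top_monomial_coeff_eq_0 by fastforce

lemma top_monomial_add_lower:
  assumes "top_monomial p m" and "r \<in> tdeg_le n" and "n < monom_deg m"
  shows "top_monomial (p + r) m"
  using assms tdeg_leD[OF assms(2)]
  by (intro top_monomialI) (auto simp: top_monomial_coeff_nonzero top_monomial_coeff_eq_0)

lemma top_monomial_sc_mult_cancel:
  assumes "top_monomial (sc k * p) m" and "k \<noteq> 0"
  shows "top_monomial p m"
  using assms top_monomial_coeff_nonzero[OF assms(1)] top_monomial_coeff_eq_0[OF assms(1)]
  by (intro top_monomialI) auto

definition shifts_monomials :: "H \<Rightarrow> (monomial \<Rightarrow> monomial) \<Rightarrow> bool" where
  "shifts_monomials v sh \<longleftrightarrow> (\<forall>m. monom_deg (sh m) = Suc (monom_deg m)) \<and>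
     (\<forall>p m. monom_coeff (v * p) (sh m) = monom_coeff p m) \<and>
     (\<forall>p m. m \<notin> range sh \<longrightarrow> monom_coeff (v * p) m = 0)"

lemma shifts_monomialsD:
  assumes "shifts_monomials v sh"
  shows "monom_deg (sh m) = Suc (monom_deg m)"
    and "monom_coeff (v * p) (sh m) = monom_coeff p m"
    and "m \<notin> range sh \<Longrightarrow> monom_coeff (v * p) m = 0"
  using assms unfolding shifts_monomials_def by blast+

lemma shifts_monomials_X12: "shifts_monomials X12 (\<lambda>(a, b, c). (Suc a, b, c))"
  unfolding shifts_monomials_def
proof (intro conjI allI impI)
  fix p :: H and m :: monomial
  show "monom_coeff (X12 * p) ((\<lambda>(a, b, c). (Suc a, b, c)) m) = monom_coeff p m"
    by (cases m) (simp add: monom_coeff_def X12_def)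
  assume "m \<notin> range (\<lambda>(a, b, c). (Suc a, b, c))"
  then have "\<exists>b c. m = (0, b, c)"
    using not0_implies_Suc by (cases m) (force simp: image_iff)
  then obtain b c where "m = (0, b, c)"
    by blast
  then show "monom_coeff (X12 * p) m = 0"
    by (simp add: monom_coeff_def X12_def)
qed (auto simp: monom_deg_def)

lemma shifts_monomials_X13: "shifts_monomials X13 (\<lambda>(a, b, c). (a, Suc b, c))"
  unfolding shifts_monomials_def
proof (intro conjI allI impI)
  fix p :: H and m :: monomial
  show "monom_coeff (X13 * p) ((\<lambda>(a, b, c). (a, Suc b, c)) m) = monom_coeff p m"
    by (cases m) (simp add: monom_coeff_def X13_def)
  assume "m \<notin> range (\<lambda>(a, b, c). (a, Suc b, c))"
  then have "\<exists>a c. m = (a, 0, c)"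
    using not0_implies_Suc by (cases m) (force simp: image_iff)
  then obtain a c where "m = (a, 0, c)"
    by blast
  then show "monom_coeff (X13 * p) m = 0"
    by (simp add: monom_coeff_def X13_def)
qed (auto simp: monom_deg_def)

lemma shifts_monomials_X23: "shifts_monomials X23 (\<lambda>(a, b, c). (a, b, Suc c))"
  unfolding shifts_monomials_def
proof (intro conjI allI impI)
  fix p :: H and m :: monomial
  show "monom_coeff (X23 * p) ((\<lambda>(a, b, c). (a, b, Suc c)) m) = monom_coeff p m"
    by (cases m) (simp add: monom_coeff_def X23_def)
  assume "m \<notin> range (\<lambda>(a, b, c). (a, b, Suc c))"
  then have "\<exists>a b. m = (a, b, 0)"
    using not0_implies_Suc by (cases m) (force simp: image_iff)
  then obtain a b where "m = (a, b, 0)"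
    by blast
  then show "monom_coeff (X23 * p) m = 0"
    by (simp add: monom_coeff_def X23_def)
qed (auto simp: monom_deg_def)

lemma top_monomial_mult:
  assumes v: "shifts_monomials v sh" and p: "top_monomial p m"
  shows "top_monomial (v * p) (sh m)"
proof (rule top_monomialI)
  show "monom_coeff (v * p) (sh m) \<noteq> 0"
    using top_monomial_coeff_nonzero[OF p] by (simp add: shifts_monomialsD[OF v])
  fix m'' assume "m'' \<noteq> sh m" and deg: "monom_deg (sh m) \<le> monom_deg m''"
  show "monom_coeff (v * p) m'' = 0"
  proof (cases "m'' \<in> range sh")
    case True
    then obtain m' where m'': "m'' = sh m'" by blast
    with \<open>m'' \<noteq> sh m\<close> have "m' \<noteq> m" by blast
    moreover have "monom_deg m \<le> monom_deg m'"
      using deg by (simp add: m'' shifts_monomialsD[OF v])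
    ultimately show ?thesis
      using top_monomial_coeff_eq_0[OF p] by (simp add: m'' shifts_monomialsD[OF v])
  next
    case False
    then show ?thesis by (rule shifts_monomialsD[OF v])
  qed
qed

lemma top_monomial_of_mult_eq:
  assumes v: "shifts_monomials v sh" and q: "top_monomial q m"
    and eq: "v * q = sc k * p + r" and r: "r \<in> tdeg_le (monom_deg m)" and "k \<noteq> 0"
  shows "top_monomial p (sh m)"
proof -
  have "sc k * p = v * q + - r"
    using eq by (simp add: algebra_simps)
  moreover have "monom_deg m < monom_deg (sh m)"
    by (simp add: shifts_monomialsD[OF v])
  ultimately have "top_monomial (sc k * p) (sh m)"
    using top_monomial_add_lower[OF top_monomial_mult[OF v q] tdeg_le_uminus[OF r]] by simp
  then show ?thesis
    using \<open>k \<noteq> 0\<close> by (rule top_monomial_sc_mult_cancel)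
qed

section \<open>Families with distinct top monomials\<close>

lemma top_monomial_family_independent:
  assumes f: "\<And>m. top_monomial (f m) m" and S: "finite S"
    and zero: "(\<Sum>m\<in>S. sc (c m) * f m) = 0" and "m \<in> S"
  shows "c m = 0"
proof (rule ccontr)
  assume "c m \<noteq> 0"
  define S' where "S' = {m\<in>S. c m \<noteq> 0}"
  have "finite S'" and "m \<in> S'"
    using S \<open>m \<in> S\<close> \<open>c m \<noteq> 0\<close> by (auto simp: S'_def)
  obtain m1 where "m1 \<in> S'" and m1: "monom_deg m1 = Max (monom_deg ` S')"
    using Max_in[of "monom_deg ` S'"] \<open>finite S'\<close> \<open>m \<in> S'\<close> by fastforce
  have max: "monom_deg m' \<le> monom_deg m1" if "m' \<in> S'" for m'
    unfolding m1 using \<open>finite S'\<close> that by simp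
  have single: "c m' * monom_coeff (f m') m1 = (if m' = m1 then c m1 * monom_coeff (f m1) m1 else 0)"
    if "m' \<in> S" for m'
  proof (cases "m' = m1 \<or> c m' = 0")
    case False
    then have "monom_deg m' \<le> monom_deg m1"
      using max that by (simp add: S'_def)
    with False show ?thesis
      using top_monomial_coeff_eq_0[OF f, of m1 m'] by auto
  qed auto
  have "monom_coeff (\<Sum>m\<in>S. sc (c m) * f m) m1 = (\<Sum>m'\<in>S. c m' * monom_coeff (f m') m1)"
    by simp
  also have "\<dots> = (\<Sum>m'\<in>S. if m' = m1 then c m1 * monom_coeff (f m1) m1 else 0)"
    by (rule sum.cong[OF refl single])
  also have "\<dots> = c m1 * monom_coeff (f m1) m1"
    using S \<open>m1 \<in> S'\<close> by (simp add: S'_def)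
  moreover have "c m1 * monom_coeff (f m1) m1 \<noteq> 0"
    using \<open>m1 \<in> S'\<close> top_monomial_coeff_nonzero[OF f] by (simp add: S'_def)
  ultimately show False
    using zero by auto
qed

lemma top_monomial_family_spans_tdeg_less:
  assumes f: "\<And>m. top_monomial (f m) m"
    and "\<And>m. n \<le> monom_deg m \<Longrightarrow> monom_coeff p m = 0"
  shows "\<exists>c. p = (\<Sum>m | monom_deg m < n. sc (c m) * f m)"
  using assms(2)
proof (induction n arbitrary: p)
  case 0
  then show ?case
    by (simp add: H_eq_0I)
next
  case (Suc n)
  define a where "a m = monom_coeff p m / monom_coeff (f m) m" for m
  define s where "s = (\<Sum>m | monom_deg m = n. sc (a m) * f m)"
  have "monom_coeff s m' = (if monom_deg m' = n then monom_coeff p m' else 0)"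
    if "n \<le> monom_deg m'" for m'
  proof -
    have single: "a m * monom_coeff (f m) m' = (if m = m' then monom_coeff p m' else 0)"
      if "m \<in> {m. monom_deg m = n}" for m
      using \<open>n \<le> monom_deg m'\<close> that top_monomial_coeff_nonzero[OF f]
      by (auto simp: a_def top_monomial_coeff_eq_0[OF f])
    have "monom_coeff s m' = (\<Sum>m | monom_deg m = n. a m * monom_coeff (f m) m')"
      by (simp add: s_def)
    also have "\<dots> = (\<Sum>m | monom_deg m = n. if m = m' then monom_coeff p m' else 0)"
      by (rule sum.cong[OF refl single])
    finally show ?thesis
      by (simp add: finite_monom_deg_eq)
  qed
  then have "monom_coeff (p - s) m' = 0" if "n \<le> monom_deg m'" for m'
    using that Suc.prems[of m'] by (cases "monom_deg m' = n") auto
  from Suc.IH[of "p - s", OF this]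
  obtain c where c: "p - s = (\<Sum>m | monom_deg m < n. sc (c m) * f m)" ..
  define c' where "c' m = (if monom_deg m = n then a m else c m)" for m
  have split: "{m. monom_deg m < Suc n} = {m. monom_deg m < n} \<union> {m. monom_deg m = n}"
    by auto
  have "(\<Sum>m | monom_deg m < n. sc (c m) * f m) = (\<Sum>m | monom_deg m < n. sc (c' m) * f m)"
    by (rule sum.cong) (simp_all add: c'_def)
  moreover have "s = (\<Sum>m | monom_deg m = n. sc (c' m) * f m)"
    unfolding s_def by (rule sum.cong) (simp_all add: c'_def)
  ultimately have "p = (\<Sum>m | monom_deg m < n. sc (c' m) * f m) + (\<Sum>m | monom_deg m = n. sc (c' m) * f m)"
    using c by (simp add: algebra_simps)
  also have "\<dots> = (\<Sum>m | monom_deg m < Suc n. sc (c' m) * f m)"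
    unfolding split
    by (rule sum.union_disjoint[symmetric]) (auto simp: finite_monom_deg_less finite_monom_deg_eq)
  finally show ?case
    by (rule exI[of _ c'])
qed

lemma top_monomial_family_spans:
  assumes f: "\<And>m. top_monomial (f m) m"
  shows "\<exists>S c. finite S \<and> p = (\<Sum>m\<in>S. sc (c m) * f m)"
proof -
  obtain n where n: "\<forall>d \<in> monom_deg ` {m. monom_coeff p m \<noteq> 0}. d < n"
    using finite_monom_support finite_nat_set_iff_bounded by blast
  have "monom_coeff p m = 0" if "n \<le> monom_deg m" for m
  proof (rule ccontr)
    assume "monom_coeff p m \<noteq> 0"
    with n have "monom_deg m < n" by blast
    with that show False by simp
  qed
  then obtain c where "p = (\<Sum>m | monom_deg m < n. sc (c m) * f m)"
    using top_monomial_family_spans_tdeg_less[OF f] by blast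
  then show ?thesis
    using finite_monom_deg_less by (intro exI conjI)
qed

section \<open>Top monomials of the Schur polynomials\<close>

definition jtriple :: "monomial \<Rightarrow> int \<times> int \<times> int" where
  "jtriple m = (case m of (a, b, c) \<Rightarrow> (int (a + b), int (a + c), int (b + c)))"

definition jsum :: "int \<times> int \<times> int \<Rightarrow> int" where
  "jsum t = (case t of (j1, j2, j3) \<Rightarrow> j1 + j2 + j3)"

lemma jsum_jtriple: "jsum (jtriple m) = 2 * int (monom_deg m)"
  by (cases m) (simp add: jsum_def jtriple_def monom_deg_def)

lemma inj_jtriple: "inj jtriple"
  by (auto simp: inj_def jtriple_def)

lemma admissible_jtriple: "admissible (jtriple m)"
  by (cases m) (simp add: admissible_def jtriple_def; presburger)

lemma admissible_imp_in_range_jtriple: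
  assumes "admissible t"
  shows "t \<in> range jtriple"
proof -
  obtain j1 j2 j3 where t: "t = (j1, j2, j3)"
    by (cases t)
  with assms have tri: "j3 \<le> j1 + j2" "j2 \<le> j1 + j3" "j1 \<le> j2 + j3" and "even (j1 + j2 + j3)"
    by (auto simp: admissible_def)
  then obtain h where h: "j1 + j2 + j3 = 2 * h"
    by blast
  have "t = jtriple (nat (h - j3), nat (h - j2), nat (h - j1))"
    using tri h by (simp add: t jtriple_def)
  then show ?thesis
    by blast
qed

lemma range_jtriple: "range jtriple = JJ"
  using admissible_jtriple admissible_imp_in_range_jtriple by (auto simp: JJ_def)

lemma K_1_1_nonzero:
  assumes "0 \<le> j1" "0 \<le> j2" "0 \<le> j3" "j3 \<le> j1 + j2"
  shows "K 1 1 j1 j2 j3 \<noteq> 0"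
proof -
  have "(j1 + j2 + j3 + 4) * (j1 + j2 - j3 + 2) \<noteq> 0" and "(j1 + 1) * (j2 + 1) \<noteq> 0"
    using assms by simp_all
  then show ?thesis
    unfolding K_def by (simp del: of_int_mult)
qed

lemma ext0_tdeg_le:
  assumes "\<And>m. monom_deg m \<le> n \<Longrightarrow> phi (jtriple m) \<in> tdeg_le n" and "jsum t \<le> 2 * int n"
  shows "ext0 phi t \<in> tdeg_le n"
proof (cases "admissible t")
  case True
  then obtain m where "t = jtriple m"
    using admissible_imp_in_range_jtriple by blast
  with assms show ?thesis
    by (simp add: ext0_def admissible_jtriple jsum_jtriple)
qed (simp add: ext0_def)

lemma schur_top_monomial_step:
  fixes phi :: "int \<times> int \<times> int \<Rightarrow> H"
  assumes IH: "\<And>m'. monom_deg m' \<le> monom_deg m \<Longrightarrow> top_monomial (phi (jtriple m')) m'"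
    and v: "shifts_monomials v sh"
    and rec: "v * phi (jtriple m) = (\<Sum>a\<in>{-1, 1}. \<Sum>b\<in>{-1, 1}. sc (k a b) * ext0 phi (s a b))"
    and s_sum: "\<And>a b. jsum (s a b) = jsum (jtriple m) + a + b"
    and m': "sh m = m'" and s_top: "s 1 1 = jtriple m'" and "k 1 1 \<noteq> 0"
  shows "top_monomial (phi (jtriple m')) m'"
proof -
  define r where "r = sc (k (-1) (-1)) * ext0 phi (s (-1) (-1)) +
    sc (k (-1) 1) * ext0 phi (s (-1) 1) + sc (k 1 (-1)) * ext0 phi (s 1 (-1))"
  have "v * phi (jtriple m) = sc (k 1 1) * phi (jtriple m') + r"
    using rec by (simp add: r_def s_top ext0_def admissible_jtriple algebra_simps)
  moreover have "r \<in> tdeg_le (monom_deg m)"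
  proof -
    have "phi (jtriple m') \<in> tdeg_le (monom_deg m)" if "monom_deg m' \<le> monom_deg m" for m'
      using tdeg_le_mono[OF top_monomial_imp_tdeg_le[OF IH[OF that]] that] .
    then show ?thesis
      unfolding r_def using s_sum jsum_jtriple
      by (intro tdeg_le_add tdeg_le_sc_mult ext0_tdeg_le) simp_all
  qed
  ultimately show ?thesis
    using top_monomial_of_mult_eq[OF v IH[OF order_refl]] \<open>k 1 1 \<noteq> 0\<close> m' by blast
qed

lemma schur_top_monomial_step_X12:
  assumes phi: "schur_family phi"
    and IH: "\<And>m'. monom_deg m' \<le> monom_deg (a, b, c) \<Longrightarrow> top_monomial (phi (jtriple m')) m'"
  shows "top_monomial (phi (jtriple (Suc a, b, c))) (Suc a, b, c)"
proof -
  define j1 j2 j3 where "j1 = int (a + b)" and "j2 = int (a + c)" and "j3 = int (b + c)"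
  have j: "jtriple (a, b, c) = (j1, j2, j3)"
    by (simp add: jtriple_def j1_def j2_def j3_def)
  show ?thesis
  proof (rule schur_top_monomial_step[OF IH shifts_monomials_X12,
        where k = "\<lambda>x y. K x y j1 j2 j3" and s = "\<lambda>x y. (j1 + x, j2 + y, j3)"])
    show "X12 * phi (jtriple (a, b, c)) =
        (\<Sum>x\<in>{-1, 1}. \<Sum>y\<in>{-1, 1}. sc (K x y j1 j2 j3) * ext0 phi (j1 + x, j2 + y, j3))"
      using phi admissible_jtriple[of "(a, b, c)"] unfolding j schur_family_def by blast
    show "K 1 1 j1 j2 j3 \<noteq> 0"
      by (rule K_1_1_nonzero) (simp_all add: j1_def j2_def j3_def)
  qed (simp_all add: j jsum_def jtriple_def j1_def j2_def j3_def)
qed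

lemma schur_top_monomial_step_X13:
  assumes phi: "schur_family phi"
    and IH: "\<And>m'. monom_deg m' \<le> monom_deg (0, b, c) \<Longrightarrow> top_monomial (phi (jtriple m')) m'"
  shows "top_monomial (phi (jtriple (0, Suc b, c))) (0, Suc b, c)"
proof -
  define j1 j2 j3 where "j1 = int b" and "j2 = int c" and "j3 = int (b + c)"
  have j: "jtriple (0, b, c) = (j1, j2, j3)"
    by (simp add: jtriple_def j1_def j2_def j3_def)
  show ?thesis
  proof (rule schur_top_monomial_step[OF IH shifts_monomials_X13,
        where k = "\<lambda>x y. K x y j1 j3 j2" and s = "\<lambda>x y. (j1 + x, j2, j3 + y)"])
    show "X13 * phi (jtriple (0, b, c)) =
        (\<Sum>x\<in>{-1, 1}. \<Sum>y\<in>{-1, 1}. sc (K x y j1 j3 j2) * ext0 phi (j1 + x, j2, j3 + y))"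
      using phi admissible_jtriple[of "(0, b, c)"] unfolding j schur_family_def by blast
    show "K 1 1 j1 j3 j2 \<noteq> 0"
      by (rule K_1_1_nonzero) (simp_all add: j1_def j2_def j3_def)
  qed (simp_all add: j jsum_def jtriple_def j1_def j2_def j3_def)
qed

lemma schur_top_monomial_step_X23:
  assumes phi: "schur_family phi"
    and IH: "\<And>m'. monom_deg m' \<le> monom_deg (0, 0, c) \<Longrightarrow> top_monomial (phi (jtriple m')) m'"
  shows "top_monomial (phi (jtriple (0, 0, Suc c))) (0, 0, Suc c)"
proof -
  define j1 j2 j3 where "j1 = (0::int)" and "j2 = int c" and "j3 = int c"
  have j: "jtriple (0, 0, c) = (j1, j2, j3)"
    by (simp add: jtriple_def j1_def j2_def j3_def)
  show ?thesis
  proof (rule schur_top_monomial_step[OF IH shifts_monomials_X23,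
        where k = "\<lambda>x y. K x y j2 j3 j1" and s = "\<lambda>x y. (j1, j2 + x, j3 + y)"])
    show "X23 * phi (jtriple (0, 0, c)) =
        (\<Sum>x\<in>{-1, 1}. \<Sum>y\<in>{-1, 1}. sc (K x y j2 j3 j1) * ext0 phi (j1, j2 + x, j3 + y))"
      using phi admissible_jtriple[of "(0, 0, c)"] unfolding j schur_family_def by blast
    show "K 1 1 j2 j3 j1 \<noteq> 0"
      by (rule K_1_1_nonzero) (simp_all add: j1_def j2_def j3_def)
  qed (simp_all add: j jsum_def jtriple_def j1_def j2_def j3_def)
qed

lemma schur_top_monomial:
  assumes phi: "schur_family phi"
  shows "top_monomial (phi (jtriple m)) m"
proof (induction m rule: measure_induct_rule[of monom_deg])
  case (less m)
  have IH: "top_monomial (phi (jtriple m')) m'" if "monom_deg m' < monom_deg m" for m'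
    using less that .
  consider "m = (0, 0, 0)" | a b c where "m = (Suc a, b, c)" | b c where "m = (0, Suc b, c)"
    | c where "m = (0, 0, Suc c)"
    by (metis prod_cases3 not0_implies_Suc)
  then show ?case
  proof cases
    case 1
    then have "phi (jtriple m) = 1"
      using phi by (simp add: schur_family_def jtriple_def)
    with 1 show ?thesis
      by (simp add: top_monomial_one)
  next
    case 2
    then show ?thesis
      using schur_top_monomial_step_X12[OF phi] IH by (simp add: monom_deg_def)
  next
    case 3
    then show ?thesis
      using schur_top_monomial_step_X13[OF phi] IH by (simp add: monom_deg_def)
  next
    case 4
    then show ?thesis
      using schur_top_monomial_step_X23[OF phi] IH by (simp add: monom_deg_def)
  qed
qed

lemma schur_family_independent:
  assumes phi: "schur_family phi" and S: "finite S" "S \<subseteq> JJ"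
    and zero: "(\<Sum>t\<in>S. sc (c t) * phi t) = 0" and "t \<in> S"
  shows "c t = 0"
proof -
  define M where "M = jtriple -` S"
  have S_eq: "S = jtriple ` M"
    using S(2) range_jtriple by (auto simp: M_def)
  have "finite M"
    unfolding M_def using S(1) inj_jtriple by (simp add: finite_vimageI)
  moreover have "(\<Sum>m\<in>M. sc (c (jtriple m)) * phi (jtriple m)) = 0"
    using zero inj_jtriple by (simp add: S_eq sum.reindex inj_on_subset)
  moreover obtain m where "m \<in> M" and "t = jtriple m"
    using \<open>t \<in> S\<close> S_eq by blast
  ultimately show "c t = 0"
    using top_monomial_family_independent[where f = "\<lambda>m. phi (jtriple m)" and c = "\<lambda>m. c (jtriple m)",
        OF schur_top_monomial[OF phi]] by blast
qed

lemma schur_family_spans: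
  assumes phi: "schur_family phi"
  shows "\<exists>S c. finite S \<and> S \<subseteq> JJ \<and> h = (\<Sum>t\<in>S. sc (c t) * phi t)"
proof -
  obtain M d where "finite M" and h: "h = (\<Sum>m\<in>M. sc (d m) * phi (jtriple m))"
    using top_monomial_family_spans[OF schur_top_monomial[OF phi]] by blast
  have "h = (\<Sum>t\<in>jtriple ` M. sc (d (inv jtriple t)) * phi t)"
    unfolding h using inj_jtriple by (simp add: sum.reindex inj_on_subset)
  moreover have "jtriple ` M \<subseteq> JJ"
    using range_jtriple by auto
  ultimately show ?thesis
    using \<open>finite M\<close> by (intro exI conjI) simp_all
qed

theorem mainTheorem6:
  fixes phi :: "int \<times> int \<times> int \<Rightarrow> H"
  assumes "schur_family phi"
  shows "(\<forall>S c. finite S \<and> S \<subseteq> JJ \<and> (\<Sum>t\<in>S. sc (c t) * phi t) = 0 \<longrightarrow> (\<forall>t\<in>S. c t = 0))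
       \<and> (\<forall>h :: H. \<exists>S c. finite S \<and> S \<subseteq> JJ \<and> h = (\<Sum>t\<in>S. sc (c t) * phi t))"
  using schur_family_independent[OF assms] schur_family_spans[OF assms] by blast

end
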